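(* Let $M(n,h)=\frac{2n+2-2\lceil 2\sqrt{n+h}\,\rceil}{4}$ and, for $h\ge1$, $m(h)=\min\{n\ge1: M(n,h)\ge h\}$. Then for every $h\ge 1$, $M(m(h),h)=h$. Furthermore, if $0\le \alpha-(m(h)+h)<3$ for some number $\alpha$ of the form $N^2$ or $N(N+1)$ with $N$ a positive integer, then $m(h+1)=m(h)+3$; otherwise $m(h+1)=m(h)+2$.
   Context: Here $M$ and $m$ are purely numerical functions as defined in the claim. *)

theory Defs
  imports Complex_Main
begin

definition M :: "nat \<Rightarrow> nat \<Rightarrow> real" where
  "M n h = (2 * real n + 2 - 2 * real_of_int \<lceil>2 * sqrt (real n + real h)\<rceil>) / 4"

definition m :: "nat \<Rightarrow> nat" where
  "m h = (LEAST n. n \<ge> 1 \<and> M n h \<ge> real h)"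

end

theory Submission imports Defs begin

(* Write r = ceil (sqrt (12 h)). With k = n + 1 - 2h the condition M(n,h) >= h reads
   ceil (sqrt (4(n+h))) <= k, i.e. 12h <= (k-2)^2, so m(h) = 2h + 1 + r; and since
   (r+1)^2 < 4(m(h)+h) <= (r+2)^2 we get M(m(h),h) = h.
   The numbers N^2 and N(N+1) with N >= 1 are exactly the quarter squares floor(K^2/4)
   with K >= 2. As 4(m(h)+h) = 12h + 4r + 4 lies just below (r+2)^2, the only quarter
   square that can fall into the window [m(h)+h, m(h)+h+3) is floor((r+2)^2/4), and it
   does so iff r^2 < 12h + 12 -- which is exactly when ceil (sqrt (12(h+1))) is r + 1
   rather than r, i.e. when m(h+1) = m(h) + 3. *)

definition ceil_sqrt :: "nat \<Rightarrow> int" where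
  "ceil_sqrt s = \<lceil>sqrt (real s)\<rceil>"

lemma ceil_sqrt_le_iff: "ceil_sqrt s \<le> k \<longleftrightarrow> 0 \<le> k \<and> int s \<le> k\<^sup>2"
proof -
  have "ceil_sqrt s \<le> k \<longleftrightarrow> sqrt (real s) \<le> of_int k"
    unfolding ceil_sqrt_def by (rule ceiling_le_iff)
  also have "\<dots> \<longleftrightarrow> 0 \<le> k \<and> real s \<le> (of_int k)\<^sup>2"
  proof
    assume le: "sqrt (real s) \<le> of_int k"
    have "0 \<le> sqrt (real s)" by simp
    with le show "0 \<le> k \<and> real s \<le> (of_int k)\<^sup>2"
      using sqrt_le_D[OF le] by linarith
  qed (simp add: real_le_lsqrt)
  also have "\<dots> \<longleftrightarrow> 0 \<le> k \<and> int s \<le> k\<^sup>2"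
    by (metis of_int_le_iff of_int_of_nat_eq of_int_power)
  finally show ?thesis .
qed

lemma sq_ceil_sqrt_ge: "int s \<le> (ceil_sqrt s)\<^sup>2"
  using ceil_sqrt_le_iff by blast

lemma sq_ceil_sqrt_minus_one_less:
  assumes "0 < s" shows "(ceil_sqrt s - 1)\<^sup>2 < int s"
  using ceil_sqrt_le_iff[of s "ceil_sqrt s - 1"] ceil_sqrt_le_iff[of s 0] assms by auto

lemma ceil_sqrt_eqI:
  assumes "0 < k" "(k - 1)\<^sup>2 < int s" "int s \<le> k\<^sup>2"
  shows "ceil_sqrt s = k"
  using ceil_sqrt_le_iff[of s k] ceil_sqrt_le_iff[of s "k - 1"] assms by auto

lemma ceiling_two_sqrt: "\<lceil>2 * sqrt (real s)\<rceil> = ceil_sqrt (4 * s)"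
  by (simp add: ceil_sqrt_def real_sqrt_mult)

lemma ceil_sqrt_12_bounds:
  assumes "h \<ge> 1"
  shows "4 \<le> ceil_sqrt (12 * h)" "12 * int h \<le> (ceil_sqrt (12 * h))\<^sup>2"
    "(ceil_sqrt (12 * h) - 1)\<^sup>2 < 12 * int h"
  using ceil_sqrt_le_iff[of "12 * h" 3] sq_ceil_sqrt_ge[of "12 * h"]
    sq_ceil_sqrt_minus_one_less[of "12 * h"] assms by auto

lemma M_ge_iff:
  assumes "h \<ge> 1"
  shows "real h \<le> M n h \<longleftrightarrow> 2 * int h + 1 + ceil_sqrt (12 * h) \<le> int n"
proof -
  define k where "k = int n + 1 - 2 * int h"
  have "\<lceil>2 * sqrt (real n + real h)\<rceil> = ceil_sqrt (4 * (n + h))"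
    using ceiling_two_sqrt[of "n + h"] by simp
  then have "real h \<le> M n h \<longleftrightarrow>
      real_of_int (ceil_sqrt (4 * (n + h))) \<le> real_of_int k"
    unfolding M_def k_def by (simp add: le_divide_eq) linarith
  also have "\<dots> \<longleftrightarrow> ceil_sqrt (4 * (n + h)) \<le> k"
    by (rule of_int_le_iff)
  also have "\<dots> \<longleftrightarrow> 0 \<le> k \<and> 12 * int h \<le> (k - 2)\<^sup>2"
  proof -
    have "(k - 2)\<^sup>2 = k\<^sup>2 - 4 * k + 4"
      by (simp add: power2_eq_square algebra_simps)
    then show ?thesis
      unfolding ceil_sqrt_le_iff k_def by auto
  qed
  also have "\<dots> \<longleftrightarrow> 0 \<le> k - 2 \<and> 12 * int h \<le> (k - 2)\<^sup>2"
  proof -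
    have "(k - 2)\<^sup>2 < 12 * int h" if "k = 0 \<or> k = 1"
      using that assms by auto
    then show ?thesis by (cases "k = 0 \<or> k = 1") auto
  qed
  also have "\<dots> \<longleftrightarrow> ceil_sqrt (12 * h) \<le> k - 2"
    by (simp add: ceil_sqrt_le_iff)
  finally show ?thesis by (simp add: k_def) linarith
qed

lemma m_eq:
  assumes "h \<ge> 1"
  shows "int (m h) = 2 * int h + 1 + ceil_sqrt (12 * h)"
proof -
  define n where "n = nat (2 * int h + 1 + ceil_sqrt (12 * h))"
  have n: "int n = 2 * int h + 1 + ceil_sqrt (12 * h)"
    using ceil_sqrt_12_bounds(1)[OF assms] by (simp add: n_def)
  have "m h = n"
    unfolding m_def
  proof (rule Least_equality)
    show "1 \<le> n \<and> real h \<le> M n h"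
      using n M_ge_iff[OF assms] ceil_sqrt_12_bounds(1)[OF assms] by auto
    show "n \<le> n'" if "1 \<le> n' \<and> real h \<le> M n' h" for n'
      using that n M_ge_iff[OF assms] by auto
  qed
  with n show ?thesis by simp
qed

lemma M_m_eq:
  assumes "h \<ge> 1" shows "M (m h) h = real h"
proof -
  define r where "r = ceil_sqrt (12 * h)"
  note r = ceil_sqrt_12_bounds[OF assms, folded r_def]
  have "int (4 * (m h + h)) = 12 * int h + 4 * r + 4"
    using m_eq[OF assms] by (simp add: r_def)
  then have "ceil_sqrt (4 * (m h + h)) = r + 2"
    using r by (intro ceil_sqrt_eqI) (auto simp: power2_eq_square algebra_simps)
  moreover have "\<lceil>2 * sqrt (real (m h) + real h)\<rceil> = ceil_sqrt (4 * (m h + h))"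
    using ceiling_two_sqrt[of "m h + h"] by simp
  ultimately show ?thesis
    using m_eq[OF assms] by (simp add: M_def r_def)
qed

lemma ceil_sqrt_12_Suc:
  assumes "h \<ge> 1"
  shows "ceil_sqrt (12 * (h + 1)) =
    ceil_sqrt (12 * h) + (if (ceil_sqrt (12 * h))\<^sup>2 < 12 * int h + 12 then 1 else 0)"
proof -
  define r where "r = ceil_sqrt (12 * h)"
  note r = ceil_sqrt_12_bounds[OF assms, folded r_def]
  show ?thesis
  proof (cases "r\<^sup>2 < 12 * int h + 12")
    case True
    have "12 * int h + 12 \<le> (r + 1)\<^sup>2"
    proof (cases "r \<le> 5")
      \<comment> \<open>for r \<ge> 6 the gap 2r + 1 between r^2 and (r+1)^2 exceeds 12; r = 4, 5 occur only for h = 1, 2\<close>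
      case True
      then have "r = 4 \<or> r = 5" using r by auto
      then show ?thesis using r by (elim disjE; simp; presburger)
    next
      case False
      then show ?thesis using r by (simp add: power2_eq_square algebra_simps)
    qed
    then have "ceil_sqrt (12 * (h + 1)) = r + 1"
      using True r by (intro ceil_sqrt_eqI) auto
    with True show ?thesis by (simp add: r_def)
  next
    case False
    then have "ceil_sqrt (12 * (h + 1)) = r"
      using r by (intro ceil_sqrt_eqI) auto
    with False show ?thesis by (simp add: r_def)
  qed
qed

lemma ex_square_or_pronic_iff_ex_quarter_square:
  "(\<exists>N::nat. N \<ge> 1 \<and> (\<exists>\<alpha>::int. (\<alpha> = int N ^ 2 \<or> \<alpha> = int N * (int N + 1)) \<and> P \<alpha>))
    \<longleftrightarrow> (\<exists>K::int. K \<ge> 2 \<and> P (K\<^sup>2 div 4))"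
proof -
  have even: "(2 * n)\<^sup>2 div 4 = n\<^sup>2" and odd: "(2 * n + 1)\<^sup>2 div 4 = n * (n + 1)" for n :: int
  proof -
    show "(2 * n)\<^sup>2 div 4 = n\<^sup>2"
      by (simp add: power_mult_distrib)
    have "(2 * n + 1)\<^sup>2 = 1 + n * (n + 1) * 4"
      by (simp add: power2_eq_square algebra_simps)
    then show "(2 * n + 1)\<^sup>2 div 4 = n * (n + 1)"
      by simp
  qed
  show ?thesis
  proof
    assume "\<exists>N::nat. N \<ge> 1 \<and> (\<exists>\<alpha>. (\<alpha> = int N ^ 2 \<or> \<alpha> = int N * (int N + 1)) \<and> P \<alpha>)"
    then obtain N :: nat and \<alpha> where N: "N \<ge> 1" "\<alpha> = int N ^ 2 \<or> \<alpha> = int N * (int N + 1)" "P \<alpha>"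
      by blast
    from N(2) show "\<exists>K::int. K \<ge> 2 \<and> P (K\<^sup>2 div 4)"
    proof
      assume "\<alpha> = int N ^ 2"
      then show ?thesis
        using N even[of "int N"] by (intro exI[of _ "2 * int N"]) auto
    next
      assume "\<alpha> = int N * (int N + 1)"
      then show ?thesis
        using N odd[of "int N"] by (intro exI[of _ "2 * int N + 1"]) auto
    qed
  next
    assume "\<exists>K::int. K \<ge> 2 \<and> P (K\<^sup>2 div 4)"
    then obtain K :: int where K: "K \<ge> 2" "P (K\<^sup>2 div 4)"
      by blast
    show "\<exists>N::nat. N \<ge> 1 \<and> (\<exists>\<alpha>. (\<alpha> = int N ^ 2 \<or> \<alpha> = int N * (int N + 1)) \<and> P \<alpha>)"
    proof (cases "even K")
      case True
      then obtain n where "K = 2 * n" by blast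
      then show ?thesis
        using K even[of n] by (intro exI[of _ "nat n"]) auto
    next
      case False
      then obtain n where "K = 2 * n + 1" using oddE by blast
      then show ?thesis
        using K odd[of n] by (intro exI[of _ "nat n"]) auto
    qed
  qed
qed

lemma quarter_square_window_iff:
  fixes R H :: int
  assumes "4 \<le> R" "12 * H \<le> R\<^sup>2" "(R - 1)\<^sup>2 < 12 * H"
  shows "(\<exists>K. K \<ge> 2 \<and> 0 \<le> K\<^sup>2 div 4 - (3 * H + 1 + R) \<and> K\<^sup>2 div 4 - (3 * H + 1 + R) < 3)
    \<longleftrightarrow> R\<^sup>2 < 12 * H + 12"
proof -
  define S where "S = 3 * H + 1 + R"
  have window_iff: "0 \<le> K\<^sup>2 div 4 - S \<and> K\<^sup>2 div 4 - S < 3 \<longleftrightarrow> 4 * S \<le> K\<^sup>2 \<and> K\<^sup>2 < 4 * S + 12"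
    for K :: int
    by linarith
  have unique: "K = R + 2" if "K \<ge> 2" "4 * S \<le> K\<^sup>2" "K\<^sup>2 < 4 * S + 12" for K
  proof -
    have "\<not> K \<le> R + 1"
    proof
      assume "K \<le> R + 1"
      then have "K\<^sup>2 \<le> (R + 1)\<^sup>2" using that(1) by (intro power_mono) auto
      then show False
        using that assms unfolding S_def by (simp add: power2_eq_square algebra_simps)
    qed
    moreover have "\<not> K \<ge> R + 3"
    proof
      assume "K \<ge> R + 3"
      then have "(R + 3)\<^sup>2 \<le> K\<^sup>2" using assms(1) by (intro power_mono) auto
      then show False
        using that assms unfolding S_def by (simp add: power2_eq_square algebra_simps)
    qed
    ultimately show ?thesis by simp
  qed
  have "4 * S \<le> (R + 2)\<^sup>2" "(R + 2)\<^sup>2 < 4 * S + 12 \<longleftrightarrow> R\<^sup>2 < 12 * H + 12"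
    using assms unfolding S_def by (simp_all add: power2_eq_square algebra_simps)
  then have "(\<exists>K. K \<ge> 2 \<and> 4 * S \<le> K\<^sup>2 \<and> K\<^sup>2 < 4 * S + 12) \<longleftrightarrow> R\<^sup>2 < 12 * H + 12"
    using unique assms(1) by (auto intro!: exI[of _ "R + 2"])
  then show ?thesis
    unfolding S_def[symmetric] window_iff .
qed

lemma m_Suc:
  assumes "h \<ge> 1"
  shows "m (h + 1) = m h + (if (ceil_sqrt (12 * h))\<^sup>2 < 12 * int h + 12 then 3 else 2)"
proof -
  have "int (m (h + 1)) = int (m h) + (if (ceil_sqrt (12 * h))\<^sup>2 < 12 * int h + 12 then 3 else 2)"
    using m_eq[OF assms] m_eq[of "h + 1"] ceil_sqrt_12_Suc[OF assms] by simp
  then show ?thesis by (cases "(ceil_sqrt (12 * h))\<^sup>2 < 12 * int h + 12") simp_all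
qed

theorem lemma4:
  fixes h :: nat
  assumes "h \<ge> 1"
  shows "M (m h) h = real h \<and>
    ((\<exists>N::nat. N \<ge> 1 \<and>
        (\<exists>\<alpha>::int. (\<alpha> = int N ^ 2 \<or> \<alpha> = int N * (int N + 1)) \<and>
           0 \<le> \<alpha> - int (m h + h) \<and> \<alpha> - int (m h + h) < 3))
       \<longrightarrow> m (h + 1) = m h + 3) \<and>
    (\<not> (\<exists>N::nat. N \<ge> 1 \<and>
        (\<exists>\<alpha>::int. (\<alpha> = int N ^ 2 \<or> \<alpha> = int N * (int N + 1)) \<and>
           0 \<le> \<alpha> - int (m h + h) \<and> \<alpha> - int (m h + h) < 3))
       \<longrightarrow> m (h + 1) = m h + 2)"
proof -
  define r where "r = ceil_sqrt (12 * h)"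
  have m_plus_h: "int (m h + h) = 3 * int h + 1 + r"
    using m_eq[OF assms] by (simp add: r_def)
  have "(\<exists>N::nat. N \<ge> 1 \<and>
        (\<exists>\<alpha>::int. (\<alpha> = int N ^ 2 \<or> \<alpha> = int N * (int N + 1)) \<and>
           0 \<le> \<alpha> - int (m h + h) \<and> \<alpha> - int (m h + h) < 3))
      \<longleftrightarrow> r\<^sup>2 < 12 * int h + 12"
    unfolding ex_square_or_pronic_iff_ex_quarter_square m_plus_h
    by (rule quarter_square_window_iff[OF ceil_sqrt_12_bounds[OF assms, folded r_def]])
  then show ?thesis
    using M_m_eq[OF assms] m_Suc[OF assms] by (simp add: r_def)
qed

end
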